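(* Let $\mathcal I=(i_-,i_+)\subseteq\mathbb R$, let $X$ have an absolutely continuous density $f$ with $f>0$ on $\mathcal I$, distribution function $F(x)=\int_{i_-}^x f(y)\,dy$, median $\bar x$ ($F(\bar x)=1/2$), and let $K(x)=F(x)/f(x)$ for $x\le\bar x$, $K(x)=(1-F(x))/f(x)$ for $x\ge\bar x$. Then for every $1\le p<\infty$ and every smooth $\phi$ on $\mathcal I$ with $\phi(\bar x)=0$ and $E[|\phi(X)|^p]<\infty$, $$E\big[|\phi(X)|^p\big]\le p^p\,E\big[K(X)^p|\phi'(X)|^p\big].$$ *)

theory Defs
  imports "HOL-Analysis.Analysis"
begin

definition ointerval :: "ereal \<Rightarrow> ereal \<Rightarrow> real set" where
  "ointerval a b = {x. a < ereal x \<and> ereal x < b}"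

definition smooth_on :: "(real \<Rightarrow> real) \<Rightarrow> real set \<Rightarrow> bool" where
  "smooth_on g S \<longleftrightarrow> (\<forall>k. \<forall>x\<in>S. ((deriv ^^ k) g) differentiable (at x))"

definition cdf_of :: "(real \<Rightarrow> real) \<Rightarrow> real \<Rightarrow> real" where
  "cdf_of f x = (LINT y:{..x}|lborel. f y)"

definition Kfun :: "(real \<Rightarrow> real) \<Rightarrow> real \<Rightarrow> real \<Rightarrow> real" where
  "Kfun f m x = (if x \<le> m then cdf_of f x / f x else (1 - cdf_of f x) / f x)"

end

theory Submission
  imports Defs
begin

(* Since phi(m) = 0, for x > m the fundamental theorem of calculus gives
   |phi(x)|^p <= int_m^x p |phi|^(p-1) |phi'|, and symmetrically for x < m. Integrating against
   f(x) dx and exchanging the order of integration turns f into the tail mass 1 - F(y) or F(y)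
   of the inner variable, which is exactly K(y) f(y). Young's inequality then bounds the result
   by (p-1)/p E|phi(X)|^p + p^(p-1) E[K(X)^p |phi'(X)|^p], and as E|phi(X)|^p is finite the first
   term can be absorbed into the left-hand side, leaving the constant p^p. *)

lemma open_ointerval: "open (ointerval a b)"
proof -
  have "ointerval a b = ereal -` {a<..<b}"
    by (auto simp: ointerval_def)
  then show ?thesis
    by (auto intro!: open_vimage continuous_intros)
qed

lemma is_interval_ointerval: "is_interval (ointerval a b)"
  unfolding is_interval_1 ointerval_def
  by (metis (mono_tags) ereal_less_eq(3) le_less_trans less_le_trans mem_Collect_eq)

lemma smooth_on_has_real_derivative:
  assumes "smooth_on \<phi> S" "x \<in> S"
  shows "(\<phi> has_real_derivative deriv \<phi> x) (at x)"
  using assms funpow_0[of deriv \<phi>]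
  unfolding smooth_on_def DERIV_deriv_iff_real_differentiable by metis

lemma smooth_on_continuous_on_deriv:
  assumes "smooth_on \<phi> S"
  shows "continuous_on S (deriv \<phi>)"
proof -
  have "(deriv ^^ 1) \<phi> = deriv \<phi>"
    by simp
  then have "deriv \<phi> differentiable (at x)" if "x \<in> S" for x
    using assms that unfolding smooth_on_def by metis
  then show ?thesis
    by (meson continuous_at_imp_continuous_on differentiable_imp_continuous_within)
qed

lemma has_real_derivative_abs_powr:
  fixes p s :: real
  assumes "1 < p"
  shows "((\<lambda>t. \<bar>t\<bar> powr p) has_real_derivative (p * \<bar>s\<bar> powr (p - 1) * sgn s)) (at s)"
proof (cases "s = 0")
  case False
  then consider "s > 0" | "s < 0" by linarith
  then show ?thesis
  proof cases
    case 1
    have "((\<lambda>t. t powr p) has_real_derivative p * s powr (p - 1)) (at s)"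
      using 1 by (rule has_real_derivative_powr)
    then have "((\<lambda>t. t powr p) has_real_derivative p * \<bar>s\<bar> powr (p - 1) * sgn s) (at s)"
      using 1 by simp
    then show ?thesis
      by (rule has_field_derivative_transform_within_open[where S="{0<..}"]) (use 1 in auto)
  next
    case 2
    have "((\<lambda>t. (- t) powr p) has_real_derivative p * (- s) powr (p - 1) * (- 1)) (at s)"
      using 2 by (auto intro!: derivative_eq_intros)
    then have "((\<lambda>t. (- t) powr p) has_real_derivative p * \<bar>s\<bar> powr (p - 1) * sgn s) (at s)"
      using 2 by simp
    then show ?thesis
      by (rule has_field_derivative_transform_within_open[where S="{..<0}"]) (use 2 in auto)
  qed
next
  case True
  have "((\<lambda>h. \<bar>h\<bar> powr (p - 1)) \<longlongrightarrow> 0) (at (0::real))"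
    using assms by (intro tendsto_zero_powrI tendsto_rabs_zero tendsto_ident_at) auto
  then have "((\<lambda>h. \<bar>\<bar>h\<bar> powr p / h\<bar>) \<longlongrightarrow> 0) (at (0::real))"
  proof (rule Lim_transform_eventually)
    have "\<bar>h\<bar> powr (p - 1) = \<bar>\<bar>h\<bar> powr p / h\<bar>" if "h \<noteq> 0" for h :: real
      using that by (simp add: abs_divide powr_diff)
    then show "\<forall>\<^sub>F h in at 0. \<bar>h\<bar> powr (p - 1) = \<bar>\<bar>h\<bar> powr p / h\<bar>"
      by (simp add: eventually_at_filter)
  qed
  then have "((\<lambda>h. \<bar>h\<bar> powr p / h) \<longlongrightarrow> 0) (at (0::real))"
    by (simp only: tendsto_rabs_zero_iff)
  then show ?thesis
    using True assms by (simp add: DERIV_def)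
qed

lemma abs_diff_le_nn_integral_deriv_bound:
  fixes F F' g :: "real \<Rightarrow> real"
  assumes "c \<le> d"
    and F': "\<And>t. t \<in> {c..d} \<Longrightarrow> (F has_real_derivative F' t) (at t)"
    and bound: "\<And>t. t \<in> {c..d} \<Longrightarrow> \<bar>F' t\<bar> \<le> g t"
    and g: "continuous_on {c..d} g"
  shows "ennreal \<bar>F d - F c\<bar> \<le> (\<integral>\<^sup>+t\<in>{c..d}. ennreal (g t) \<partial>lborel)"
proof -
  have "(F' has_integral (F d - F c)) {c..d}"
    using assms(1) F'
    by (intro fundamental_theorem_of_calculus)
       (auto simp: has_real_derivative_iff_has_vector_derivative has_vector_derivative_at_within)
  then have "\<bar>F d - F c\<bar> \<le> integral {c..d} g"
    using bound g by (metis integral_norm_bound_integral integrable_continuous_interval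
        has_integral_integrable integral_unique real_norm_def)
  moreover have "(\<integral>\<^sup>+t\<in>{c..d}. ennreal (g t) \<partial>lborel) = ennreal (integral {c..d} g)"
    using bound g by (intro nn_integral_has_integral_lebesgue' integrable_integral
        integrable_continuous_interval) (force intro: order_trans[OF abs_ge_zero])+
  ultimately show ?thesis
    by (simp add: ennreal_leI)
qed

(* |s|^(p-1), the factor in the derivative of |s|^p, read as 1 at p = 1: plain powr would
   give the junk value 0 powr 0 = 0 there. *)
definition abs_powr_pred :: "real \<Rightarrow> real \<Rightarrow> real" where
  "abs_powr_pred p s = (if p = 1 then 1 else \<bar>s\<bar> powr (p - 1))"

lemma abs_powr_pred_nonneg: "0 \<le> abs_powr_pred p s"
  by (simp add: abs_powr_pred_def)

lemma continuous_on_abs_powr_pred_weight: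
  assumes "1 \<le> p" "continuous_on S \<phi>" "continuous_on S \<phi>'"
  shows "continuous_on S (\<lambda>t. p * abs_powr_pred p (\<phi> t) * \<bar>\<phi>' t\<bar>)"
  using assms unfolding abs_powr_pred_def
  by (cases "p = 1") (auto intro!: continuous_intros continuous_on_powr')

lemma abs_powr_diff_le_nn_integral:
  fixes \<phi> \<phi>' :: "real \<Rightarrow> real"
  assumes "c \<le> d" "1 \<le> p"
    and \<phi>': "\<And>t. t \<in> {c..d} \<Longrightarrow> (\<phi> has_real_derivative \<phi>' t) (at t)"
    and cont: "continuous_on {c..d} \<phi>'"
  shows "ennreal \<bar>\<bar>\<phi> d\<bar> powr p - \<bar>\<phi> c\<bar> powr p\<bar>
    \<le> (\<integral>\<^sup>+t\<in>{c..d}. ennreal (p * abs_powr_pred p (\<phi> t) * \<bar>\<phi>' t\<bar>) \<partial>lborel)"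
proof (cases "p = 1")
  case True
  have "ennreal \<bar>\<bar>\<phi> d\<bar> - \<bar>\<phi> c\<bar>\<bar> \<le> ennreal \<bar>\<phi> d - \<phi> c\<bar>"
    by (intro ennreal_leI abs_triangle_ineq3)
  also have "ennreal \<bar>\<phi> d - \<phi> c\<bar> \<le> (\<integral>\<^sup>+t\<in>{c..d}. ennreal \<bar>\<phi>' t\<bar> \<partial>lborel)"
    using assms by (intro abs_diff_le_nn_integral_deriv_bound) (auto intro: continuous_intros)
  finally show ?thesis
    using True by (simp add: abs_powr_pred_def)
next
  case False
  then have "1 < p"
    using assms(2) by simp
  have "continuous_on {c..d} \<phi>"
    using \<phi>' by (meson DERIV_isCont continuous_at_imp_continuous_on)
  then have "continuous_on {c..d} (\<lambda>t. p * abs_powr_pred p (\<phi> t) * \<bar>\<phi>' t\<bar>)"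
    using assms(2) cont by (intro continuous_on_abs_powr_pred_weight)
  moreover have "((\<lambda>t. \<bar>\<phi> t\<bar> powr p) has_real_derivative
      p * \<bar>\<phi> t\<bar> powr (p - 1) * sgn (\<phi> t) * \<phi>' t) (at t)" if "t \<in> {c..d}" for t
    using DERIV_chain2[OF has_real_derivative_abs_powr[OF \<open>1 < p\<close>] \<phi>'[OF that]] by simp
  moreover have "\<bar>p * \<bar>\<phi> t\<bar> powr (p - 1) * sgn (\<phi> t) * \<phi>' t\<bar>
      \<le> p * abs_powr_pred p (\<phi> t) * \<bar>\<phi>' t\<bar>" for t
    using False \<open>1 < p\<close> by (auto simp: abs_powr_pred_def abs_mult sgn_real_def)
  ultimately show ?thesis
    using \<open>c \<le> d\<close> by (intro abs_diff_le_nn_integral_deriv_bound)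
qed

lemma nn_integral_two_sided_hardy:
  fixes f g \<psi> :: "real \<Rightarrow> ennreal"
  assumes [measurable]: "f \<in> borel_measurable borel" "g \<in> borel_measurable borel"
    and right: "\<And>x. m \<le> x \<Longrightarrow> \<psi> x \<le> (\<integral>\<^sup>+y\<in>{m..x}. g y \<partial>lborel)"
    and left: "\<And>x. x < m \<Longrightarrow> \<psi> x \<le> (\<integral>\<^sup>+y\<in>{x..m}. g y \<partial>lborel)"
  shows "(\<integral>\<^sup>+x. f x * \<psi> x \<partial>lborel)
    \<le> (\<integral>\<^sup>+y. g y * (if m \<le> y then \<integral>\<^sup>+x\<in>{y..}. f x \<partial>lborel else \<integral>\<^sup>+x\<in>{..y}. f x \<partial>lborel) \<partial>lborel)"
    (is "_ \<le> ?rhs")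
proof -
  define R where "R x y = f x * g y * (if m \<le> y \<and> y \<le> x then 1 else 0)" for x y
  define L where "L x y = f x * g y * (if x \<le> y \<and> y < m then 1 else 0)" for x y
  have R_meas [measurable]: "case_prod R \<in> borel_measurable (lborel \<Otimes>\<^sub>M lborel)"
    and L_meas [measurable]: "case_prod L \<in> borel_measurable (lborel \<Otimes>\<^sub>M lborel)"
    unfolding R_def L_def by measurable
  have "f x * \<psi> x \<le> (\<integral>\<^sup>+y. R x y \<partial>lborel) + (\<integral>\<^sup>+y. L x y \<partial>lborel)" for x
  proof (cases "m \<le> x")
    case True
    have "(\<integral>\<^sup>+y. R x y \<partial>lborel) = f x * (\<integral>\<^sup>+y\<in>{m..x}. g y \<partial>lborel)"
      unfolding R_def
      by (subst nn_integral_cmult[symmetric]) (auto simp: indicator_def intro!: nn_integral_cong)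
    then have "f x * \<psi> x \<le> (\<integral>\<^sup>+y. R x y \<partial>lborel)"
      using right[OF True] by (simp add: mult_left_mono)
    then show ?thesis
      by (simp add: add_increasing2)
  next
    case False
    have "(\<integral>\<^sup>+y. L x y \<partial>lborel) = f x * (\<integral>\<^sup>+y\<in>{x..m}. g y \<partial>lborel)"
      unfolding L_def
      by (subst nn_integral_cmult[symmetric], simp, intro nn_integral_cong_AE,
          use AE_lborel_singleton[of m] in eventually_elim) (auto simp: indicator_def)
    then have "f x * \<psi> x \<le> (\<integral>\<^sup>+y. L x y \<partial>lborel)"
      using left False by (simp add: mult_left_mono)
    then show ?thesis
      by (simp add: add_increasing)
  qed
  then have "(\<integral>\<^sup>+x. f x * \<psi> x \<partial>lborel)
      \<le> (\<integral>\<^sup>+x. (\<integral>\<^sup>+y. R x y \<partial>lborel) + (\<integral>\<^sup>+y. L x y \<partial>lborel) \<partial>lborel)"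
    by (rule nn_integral_mono)
  also have "\<dots> = (\<integral>\<^sup>+x. \<integral>\<^sup>+y. R x y \<partial>lborel \<partial>lborel) + (\<integral>\<^sup>+x. \<integral>\<^sup>+y. L x y \<partial>lborel \<partial>lborel)"
    by (rule nn_integral_add) measurable
  also have "\<dots> = (\<integral>\<^sup>+y. \<integral>\<^sup>+x. R x y \<partial>lborel \<partial>lborel) + (\<integral>\<^sup>+y. \<integral>\<^sup>+x. L x y \<partial>lborel \<partial>lborel)"
    using lborel_pair.Fubini'[OF R_meas] lborel_pair.Fubini'[OF L_meas] by simp
  also have "\<dots> = (\<integral>\<^sup>+y. (\<integral>\<^sup>+x. R x y \<partial>lborel) + (\<integral>\<^sup>+x. L x y \<partial>lborel) \<partial>lborel)"
    by (rule nn_integral_add[symmetric]) measurable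
  also have "\<dots> \<le> ?rhs"
  proof (intro nn_integral_mono)
    fix y
    show "(\<integral>\<^sup>+x. R x y \<partial>lborel) + (\<integral>\<^sup>+x. L x y \<partial>lborel)
      \<le> g y * (if m \<le> y then \<integral>\<^sup>+x\<in>{y..}. f x \<partial>lborel else \<integral>\<^sup>+x\<in>{..y}. f x \<partial>lborel)"
      unfolding R_def L_def
      by (cases "m \<le> y") (auto simp: nn_integral_cmult[symmetric] indicator_def mult_ac
          intro!: nn_integral_mono)
  qed
  finally show ?thesis .
qed

lemma borel_measurable_continuous_on_mult_indicator:
  fixes w h :: "real \<Rightarrow> real"
  assumes "I \<in> sets borel" "continuous_on I w" "h \<in> borel_measurable borel"
  shows "(\<lambda>y. ennreal (w y * h y) * indicator I y) \<in> borel_measurable borel"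
proof -
  have [measurable]: "(\<lambda>y. indicator I y * w y) \<in> borel_measurable borel"
    using borel_measurable_continuous_on_indicator[OF assms(1,2)] by simp
  have "(\<lambda>y. ennreal (indicator I y * w y * h y)) \<in> borel_measurable borel"
    using assms(3) by measurable
  moreover have "(\<lambda>y. ennreal (w y * h y) * indicator I y) = (\<lambda>y. ennreal (indicator I y * w y * h y))"
    by (auto simp: indicator_def)
  ultimately show ?thesis
    by simp
qed

lemma nn_integral_abs_powr_le_tail_weighted:
  fixes I :: "real set" and f \<phi> \<phi>' :: "real \<Rightarrow> real"
  assumes I: "open I" "is_interval I" "m \<in> I" and "1 \<le> p"
    and f [measurable]: "f \<in> borel_measurable borel"
    and \<phi>': "\<And>t. t \<in> I \<Longrightarrow> (\<phi> has_real_derivative \<phi>' t) (at t)"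
    and cont: "continuous_on I \<phi>'" and "\<phi> m = 0"
  shows "(\<integral>\<^sup>+x\<in>I. ennreal (\<bar>\<phi> x\<bar> powr p * f x) \<partial>lborel)
    \<le> (\<integral>\<^sup>+y\<in>I. ennreal (p * abs_powr_pred p (\<phi> y) * \<bar>\<phi>' y\<bar>) *
         (if m \<le> y then \<integral>\<^sup>+x\<in>{y..}. ennreal (f x) \<partial>lborel else \<integral>\<^sup>+x\<in>{..y}. ennreal (f x) \<partial>lborel)
       \<partial>lborel)"
    (is "_ \<le> ?rhs")
proof -
  define w where "w t = p * abs_powr_pred p (\<phi> t) * \<bar>\<phi>' t\<bar>" for t
  define g where "g t = ennreal (w t) * indicator I t" for t
  define \<psi> where "\<psi> x = ennreal (\<bar>\<phi> x\<bar> powr p) * indicator I x" for x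
  have "continuous_on I \<phi>"
    using \<phi>' by (meson DERIV_isCont continuous_at_imp_continuous_on)
  then have "continuous_on I w"
    unfolding w_def using \<open>1 \<le> p\<close> cont by (intro continuous_on_abs_powr_pred_weight)
  then have g_meas [measurable]: "g \<in> borel_measurable borel"
    using borel_measurable_continuous_on_mult_indicator[of I w "\<lambda>_. 1"] \<open>open I\<close>
    unfolding g_def by simp
  have interval_sub: "{c..d} \<subseteq> I" if "c \<in> I" "d \<in> I" for c d
    using \<open>is_interval I\<close> that unfolding is_interval_1 by (meson atLeastAtMost_iff subsetI)
  have bound: "\<psi> x \<le> (\<integral>\<^sup>+y\<in>{c..d}. g y \<partial>lborel)"
    if "c \<le> d" "c \<in> I" "d \<in> I" "x = d \<and> m = c \<or> x = c \<and> m = d" for x c d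
  proof -
    have "\<psi> x = ennreal \<bar>\<bar>\<phi> d\<bar> powr p - \<bar>\<phi> c\<bar> powr p\<bar>"
      using that \<open>\<phi> m = 0\<close> by (auto simp: \<psi>_def)
    also have "\<dots> \<le> (\<integral>\<^sup>+y\<in>{c..d}. ennreal (w y) \<partial>lborel)"
      unfolding w_def using that interval_sub[of c d] \<open>1 \<le> p\<close>
      by (intro abs_powr_diff_le_nn_integral \<phi>' continuous_on_subset[OF cont]) auto
    also have "\<dots> = (\<integral>\<^sup>+y\<in>{c..d}. g y \<partial>lborel)"
      using interval_sub[OF that(2,3)] by (intro nn_integral_cong) (auto simp: g_def indicator_def)
    finally show ?thesis .
  qed
  have "(\<integral>\<^sup>+x\<in>I. ennreal (\<bar>\<phi> x\<bar> powr p * f x) \<partial>lborel) = (\<integral>\<^sup>+x. ennreal (f x) * \<psi> x \<partial>lborel)"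
    by (intro nn_integral_cong) (auto simp: \<psi>_def ennreal_mult'' mult_ac)
  also have "\<dots> \<le> (\<integral>\<^sup>+y. g y *
      (if m \<le> y then \<integral>\<^sup>+x\<in>{y..}. ennreal (f x) \<partial>lborel else \<integral>\<^sup>+x\<in>{..y}. ennreal (f x) \<partial>lborel) \<partial>lborel)"
  proof (rule nn_integral_two_sided_hardy)
    show "\<psi> x \<le> (\<integral>\<^sup>+y\<in>{m..x}. g y \<partial>lborel)" if "m \<le> x" for x
    proof (cases "x \<in> I")
      case True
      then show ?thesis
        using that \<open>m \<in> I\<close> by (intro bound) auto
    qed (simp add: \<psi>_def)
    show "\<psi> x \<le> (\<integral>\<^sup>+y\<in>{x..m}. g y \<partial>lborel)" if "x < m" for x
    proof (cases "x \<in> I")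
      case True
      then show ?thesis
        using that \<open>m \<in> I\<close> by (intro bound) auto
    qed (simp add: \<psi>_def)
  qed measurable
  also have "\<dots> = ?rhs"
    by (intro nn_integral_cong) (simp add: g_def w_def mult_ac)
  finally show ?thesis .
qed

lemma cdf_of_eq_integral:
  "cdf_of f y = (\<integral>x. f x * indicator {..y} x \<partial>lborel)"
  unfolding cdf_of_def set_lebesgue_integral_def by (simp add: mult.commute)

lemma nn_integral_atMost_eq_cdf_of:
  assumes "integrable lborel f" "\<And>x. 0 \<le> f x"
  shows "(\<integral>\<^sup>+x\<in>{..y}. ennreal (f x) \<partial>lborel) = ennreal (cdf_of f y)"
proof -
  have "(\<integral>\<^sup>+x\<in>{..y}. ennreal (f x) \<partial>lborel) = (\<integral>\<^sup>+x. ennreal (f x * indicator {..y} x) \<partial>lborel)"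
    by (intro nn_integral_cong) (simp add: indicator_def)
  also have "\<dots> = ennreal (cdf_of f y)"
    unfolding cdf_of_eq_integral using assms
    by (intro nn_integral_eq_integral integrable_real_mult_indicator) auto
  finally show ?thesis .
qed

lemma nn_integral_atLeast_eq_cdf_of:
  assumes "integrable lborel f" "\<And>x. 0 \<le> f x" "(\<integral>x. f x \<partial>lborel) = 1"
  shows "(\<integral>\<^sup>+x\<in>{y..}. ennreal (f x) \<partial>lborel) = ennreal (1 - cdf_of f y)"
proof -
  have int: "integrable lborel (\<lambda>x. f x * indicator A x)" if "A \<in> sets borel" for A
    using assms(1) that by (simp add: integrable_real_mult_indicator)
  have "(\<integral>x. f x * indicator {y<..} x \<partial>lborel) = 1 - cdf_of f y"
  proof -
    have "(\<integral>x. f x \<partial>lborel) = (\<integral>x. f x * indicator {..y} x + f x * indicator {y<..} x \<partial>lborel)"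
      by (intro Bochner_Integration.integral_cong) (auto simp: indicator_def)
    also have "\<dots> = cdf_of f y + (\<integral>x. f x * indicator {y<..} x \<partial>lborel)"
      unfolding cdf_of_eq_integral by (intro Bochner_Integration.integral_add int) simp_all
    finally show ?thesis
      using assms(3) by simp
  qed
  moreover have "(\<integral>\<^sup>+x\<in>{y..}. ennreal (f x) \<partial>lborel)
      = ennreal (\<integral>x. f x * indicator {y<..} x \<partial>lborel)"
  proof -
    have "(\<integral>\<^sup>+x\<in>{y..}. ennreal (f x) \<partial>lborel) = (\<integral>\<^sup>+x. ennreal (f x * indicator {y<..} x) \<partial>lborel)"
      by (intro nn_integral_cong_AE, use AE_lborel_singleton[of y] in eventually_elim)
         (auto simp: indicator_def)
    also have "\<dots> = ennreal (\<integral>x. f x * indicator {y<..} x \<partial>lborel)"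
      using assms(2) by (intro nn_integral_eq_integral int) simp_all
    finally show ?thesis .
  qed
  ultimately show ?thesis
    by simp
qed

lemma mono_cdf_of:
  assumes "integrable lborel f" "\<And>x. 0 \<le> f x"
  shows "mono (cdf_of f)"
proof
  fix x y :: real
  assume "x \<le> y"
  then show "cdf_of f x \<le> cdf_of f y"
    unfolding cdf_of_eq_integral using assms
    by (intro Bochner_Integration.integral_mono integrable_real_mult_indicator)
       (auto simp: indicator_def)
qed

lemma cdf_of_nonneg: "(\<And>x. 0 \<le> f x) \<Longrightarrow> 0 \<le> cdf_of f y"
  unfolding cdf_of_eq_integral by (auto intro!: integral_nonneg_AE)

lemma cdf_of_le_one:
  assumes "integrable lborel f" "\<And>x. 0 \<le> f x" "(\<integral>x. f x \<partial>lborel) = 1"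
  shows "cdf_of f y \<le> 1"
proof -
  have "cdf_of f y \<le> (\<integral>x. f x \<partial>lborel)"
    unfolding cdf_of_eq_integral using assms(1,2)
    by (intro Bochner_Integration.integral_mono integrable_real_mult_indicator)
       (auto simp: indicator_def)
  then show ?thesis
    using assms(3) by simp
qed

lemma Kfun_nonneg:
  assumes "integrable lborel f" "\<And>x. 0 \<le> f x" "(\<integral>x. f x \<partial>lborel) = 1"
  shows "0 \<le> Kfun f m x"
  using assms cdf_of_nonneg[of f x] cdf_of_le_one[of f x] unfolding Kfun_def by auto

lemma borel_measurable_Kfun:
  assumes "integrable lborel f" "\<And>x. 0 \<le> f x"
  shows "Kfun f m \<in> borel_measurable borel"
proof -
  have [measurable]: "f \<in> borel_measurable borel" "cdf_of f \<in> borel_measurable borel"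
    using assms borel_measurable_mono[OF mono_cdf_of] by auto
  show ?thesis
    unfolding Kfun_def[abs_def] by measurable
qed

(* At y = m the two sides take different branches; they agree because F(m) = 1/2. *)
lemma ennreal_Kfun_mult_eq_tail:
  assumes "integrable lborel f" "\<And>x. 0 \<le> f x" "(\<integral>x. f x \<partial>lborel) = 1"
    and "cdf_of f m = 1 / 2" "0 < f y"
  shows "ennreal (Kfun f m y * f y) = (if m \<le> y then \<integral>\<^sup>+x\<in>{y..}. ennreal (f x) \<partial>lborel
    else \<integral>\<^sup>+x\<in>{..y}. ennreal (f x) \<partial>lborel)"
  using assms by (auto simp: Kfun_def nn_integral_atLeast_eq_cdf_of nn_integral_atMost_eq_cdf_of)

lemma young_abs_powr_pred:
  fixes a b p :: real
  assumes "1 \<le> p" "0 \<le> b"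
  shows "p * abs_powr_pred p a * b \<le> (p - 1) / p * \<bar>a\<bar> powr p + p powr (p - 1) * b powr p"
proof (cases "p = 1 \<or> a = 0 \<or> b = 0")
  case True
  then show ?thesis
    using assms by (auto simp: abs_powr_pred_def)
next
  case False
  then have "1 < p" "0 < \<bar>a\<bar>" "0 < b"
    using assms by auto
  have "\<bar>a\<bar> powr (p - 1) * (p * b) \<le> (\<bar>a\<bar> powr (p - 1)) powr (p / (p - 1)) / (p / (p - 1))
      + (p * b) powr p / p"
    using \<open>1 < p\<close> \<open>0 < b\<close> by (intro Youngs_inequality) (auto simp: field_simps)
  also have "(\<bar>a\<bar> powr (p - 1)) powr (p / (p - 1)) = \<bar>a\<bar> powr p"
    using \<open>1 < p\<close> by (simp add: powr_powr)
  also have "(p * b) powr p / p = p powr (p - 1) * b powr p"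
    using \<open>1 < p\<close> \<open>0 < b\<close> by (simp add: powr_mult powr_diff)
  finally show ?thesis
    using False by (simp add: abs_powr_pred_def algebra_simps)
qed

lemma ennreal_le_absorb:
  fixes A B :: ennreal and c :: real
  assumes "A < \<infinity>" "A \<le> ennreal c * A + B" "0 \<le> c" "c < 1"
  shows "A \<le> ennreal (1 / (1 - c)) * B"
proof (cases "B = \<infinity>")
  case True
  then show ?thesis
    using \<open>c < 1\<close> by (simp add: ennreal_mult_top)
next
  case False
  obtain a b where ab: "A = ennreal a" "B = ennreal b" "0 \<le> a" "0 \<le> b"
    using \<open>A < \<infinity>\<close> False by (cases A; cases B) auto
  have "ennreal a \<le> ennreal (c * a + b)"
    using assms(2,3) ab by (simp add: ennreal_mult'' ennreal_plus)
  moreover have "0 \<le> c * a + b"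
    using ab \<open>0 \<le> c\<close> by simp
  ultimately have "a \<le> c * a + b"
    using ennreal_le_iff by blast
  then have "a \<le> 1 / (1 - c) * b"
    using \<open>c < 1\<close> by (simp add: field_simps)
  then show ?thesis
    using ab \<open>c < 1\<close> by (simp add: ennreal_leI flip: ennreal_mult'')
qed

lemma tail_weighted_le_young:
  fixes f :: "real \<Rightarrow> real"
  assumes f: "integrable lborel f" "\<And>x. 0 \<le> f x" "(\<integral>x. f x \<partial>lborel) = 1"
    and "cdf_of f m = 1 / 2" "0 < f y" "1 \<le> p"
  shows "ennreal (p * abs_powr_pred p s * \<bar>s'\<bar>) *
      (if m \<le> y then \<integral>\<^sup>+x\<in>{y..}. ennreal (f x) \<partial>lborel else \<integral>\<^sup>+x\<in>{..y}. ennreal (f x) \<partial>lborel)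
    \<le> ennreal ((p - 1) / p) * ennreal (\<bar>s\<bar> powr p * f y)
      + ennreal (p powr (p - 1)) * ennreal (Kfun f m y powr p * \<bar>s'\<bar> powr p * f y)"
proof -
  have K: "0 \<le> Kfun f m y"
    using f by (rule Kfun_nonneg)
  have "p * abs_powr_pred p s * (Kfun f m y * \<bar>s'\<bar>) * f y
      \<le> ((p - 1) / p * \<bar>s\<bar> powr p + p powr (p - 1) * (Kfun f m y * \<bar>s'\<bar>) powr p) * f y"
    using K \<open>1 \<le> p\<close> f(2) by (intro mult_right_mono young_abs_powr_pred) auto
  also have "\<dots> = (p - 1) / p * (\<bar>s\<bar> powr p * f y) + p powr (p - 1) * (Kfun f m y powr p * \<bar>s'\<bar> powr p * f y)"
    using K by (simp add: powr_mult algebra_simps)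
  finally show ?thesis
    using assms K abs_powr_pred_nonneg[of p s]
    by (simp add: ennreal_Kfun_mult_eq_tail[symmetric] ennreal_leI mult_ac
        flip: ennreal_mult'' ennreal_plus)
qed

lemma nn_set_integral_add_cmult:
  fixes X Y :: "'a \<Rightarrow> ennreal"
  assumes "(\<lambda>y. X y * indicator I y) \<in> borel_measurable M"
    and "(\<lambda>y. Y y * indicator I y) \<in> borel_measurable M"
  shows "(\<integral>\<^sup>+y\<in>I. c * X y + d * Y y \<partial>M) = c * (\<integral>\<^sup>+y\<in>I. X y \<partial>M) + d * (\<integral>\<^sup>+y\<in>I. Y y \<partial>M)"
proof -
  have "(\<integral>\<^sup>+y\<in>I. c * X y + d * Y y \<partial>M)
      = (\<integral>\<^sup>+y. c * (X y * indicator I y) + d * (Y y * indicator I y) \<partial>M)"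
    by (intro nn_integral_cong) (simp add: distrib_right mult.assoc)
  also have "\<dots> = (\<integral>\<^sup>+y. c * (X y * indicator I y) \<partial>M) + (\<integral>\<^sup>+y. d * (Y y * indicator I y) \<partial>M)"
    using assms by (intro nn_integral_add) auto
  also have "\<dots> = c * (\<integral>\<^sup>+y\<in>I. X y \<partial>M) + d * (\<integral>\<^sup>+y\<in>I. Y y \<partial>M)"
    using assms by (simp add: nn_integral_cmult)
  finally show ?thesis .
qed

lemma nn_set_integral_tail_weighted_le_young:
  fixes f \<phi> \<phi>' :: "real \<Rightarrow> real"
  assumes I: "I \<in> sets borel" "continuous_on I \<phi>" "continuous_on I \<phi>'"
    and f: "integrable lborel f" "\<And>x. 0 \<le> f x" "(\<integral>x. f x \<partial>lborel) = 1"
    and f_pos: "\<And>x. x \<in> I \<Longrightarrow> 0 < f x"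
    and "cdf_of f m = 1 / 2" "1 \<le> p"
  shows "(\<integral>\<^sup>+y\<in>I. ennreal (p * abs_powr_pred p (\<phi> y) * \<bar>\<phi>' y\<bar>) *
      (if m \<le> y then \<integral>\<^sup>+x\<in>{y..}. ennreal (f x) \<partial>lborel else \<integral>\<^sup>+x\<in>{..y}. ennreal (f x) \<partial>lborel)
      \<partial>lborel)
    \<le> ennreal ((p - 1) / p) * (\<integral>\<^sup>+y\<in>I. ennreal (\<bar>\<phi> y\<bar> powr p * f y) \<partial>lborel)
      + ennreal (p powr (p - 1)) *
        (\<integral>\<^sup>+y\<in>I. ennreal (Kfun f m y powr p * \<bar>\<phi>' y\<bar> powr p * f y) \<partial>lborel)"
proof -
  have [measurable]: "f \<in> borel_measurable borel" "Kfun f m \<in> borel_measurable borel"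
    using f by (auto intro: borel_measurable_Kfun)
  have "continuous_on I (\<lambda>y. \<bar>\<phi> y\<bar> powr p)" "continuous_on I (\<lambda>y. \<bar>\<phi>' y\<bar> powr p)"
    using I \<open>1 \<le> p\<close> by (auto intro!: continuous_on_powr' continuous_on_rabs continuous_on_const)
  then have "(\<lambda>y. ennreal (\<bar>\<phi> y\<bar> powr p * f y) * indicator I y) \<in> borel_measurable lborel"
    and "(\<lambda>y. ennreal (\<bar>\<phi>' y\<bar> powr p * (Kfun f m y powr p * f y)) * indicator I y)
      \<in> borel_measurable lborel"
    by (auto intro!: borel_measurable_continuous_on_mult_indicator[OF I(1)])
  then have meas: "(\<lambda>y. ennreal (\<bar>\<phi> y\<bar> powr p * f y) * indicator I y) \<in> borel_measurable lborel"
    "(\<lambda>y. ennreal (Kfun f m y powr p * \<bar>\<phi>' y\<bar> powr p * f y) * indicator I y) \<in> borel_measurable lborel"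
    by (simp_all add: mult_ac)
  show ?thesis
    unfolding nn_set_integral_add_cmult[OF meas, symmetric]
    using tail_weighted_le_young[OF f(1-3) \<open>cdf_of f m = 1 / 2\<close> f_pos \<open>1 \<le> p\<close>]
    by (intro nn_integral_mono) (simp split: split_indicator split del: if_split)
qed

theorem mainTheorem9:
  fixes a b :: ereal and f \<phi> :: "real \<Rightarrow> real" and m p :: real
  assumes "a < b"
    and f_meas: "f \<in> borel_measurable lborel"
    and f_pos: "\<forall>x\<in>ointerval a b. f x > 0"
    and f_zero: "\<forall>x. x \<notin> ointerval a b \<longrightarrow> f x = 0"
    and f_int: "integrable lborel f"
    and f_total: "(LINT x|lborel. f x) = 1"
    and median: "m \<in> ointerval a b" "cdf_of f m = 1 / 2"
    and p: "1 \<le> p"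
    and smooth: "smooth_on \<phi> (ointerval a b)"
    and phi_m: "\<phi> m = 0"
    and finite_moment: "(\<integral>\<^sup>+ x\<in>ointerval a b. ennreal (\<bar>\<phi> x\<bar> powr p * f x) \<partial>lborel) < \<infinity>"
  shows "(\<integral>\<^sup>+ x\<in>ointerval a b. ennreal (\<bar>\<phi> x\<bar> powr p * f x) \<partial>lborel)
       \<le> ennreal (p powr p) *
         (\<integral>\<^sup>+ x\<in>ointerval a b. ennreal (Kfun f m x powr p * \<bar>deriv \<phi> x\<bar> powr p * f x) \<partial>lborel)"
proof -
  define I where "I = ointerval a b"
  have I: "open I" "is_interval I" "I \<in> sets borel" and "m \<in> I"
    unfolding I_def using median by (simp_all add: open_ointerval is_interval_ointerval)
  have f_pos_I: "0 < f x" if "x \<in> I" for x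
    using f_pos that unfolding I_def by blast
  have f_nonneg: "0 \<le> f x" for x
    using f_pos f_zero by (metis order.refl order.strict_implies_order)
  have \<phi>': "(\<phi> has_real_derivative deriv \<phi> x) (at x)" if "x \<in> I" for x
    using smooth that unfolding I_def by (rule smooth_on_has_real_derivative)
  have cont: "continuous_on I \<phi>" "continuous_on I (deriv \<phi>)"
    using \<phi>' smooth unfolding I_def
    by (auto intro: smooth_on_continuous_on_deriv DERIV_isCont continuous_at_imp_continuous_on)
  have f_borel: "f \<in> borel_measurable borel"
    using f_meas by simp
  have "(\<integral>\<^sup>+x\<in>I. ennreal (\<bar>\<phi> x\<bar> powr p * f x) \<partial>lborel)
    \<le> ennreal ((p - 1) / p) * (\<integral>\<^sup>+x\<in>I. ennreal (\<bar>\<phi> x\<bar> powr p * f x) \<partial>lborel)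
      + ennreal (p powr (p - 1)) *
        (\<integral>\<^sup>+x\<in>I. ennreal (Kfun f m x powr p * \<bar>deriv \<phi> x\<bar> powr p * f x) \<partial>lborel)"
    (is "?A \<le> _ * ?A + _ * ?B")
    using nn_integral_abs_powr_le_tail_weighted[OF I(1,2) \<open>m \<in> I\<close> p f_borel \<phi>' cont(2) phi_m]
      nn_set_integral_tail_weighted_le_young[OF I(3) cont f_int f_nonneg f_total f_pos_I median(2) p]
    by (rule order_trans)
  then have "?A \<le> ennreal (1 / (1 - (p - 1) / p)) * (ennreal (p powr (p - 1)) * ?B)"
    using finite_moment p unfolding I_def by (intro ennreal_le_absorb) auto
  also have "\<dots> = ennreal (1 / (1 - (p - 1) / p) * p powr (p - 1)) * ?B"
    by (subst ennreal_mult'') (simp_all add: mult.assoc)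
  also have "1 / (1 - (p - 1) / p) * p powr (p - 1) = p powr p"
    using p by (simp add: powr_diff field_simps)
  finally show ?thesis
    unfolding I_def .
qed

end
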